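(* Let $\mathfrak g$ be a basic simple Lie superalgebra with an $\mathfrak{sl}_2$-triple $\{e,x,f\}$ giving a minimal grading $\mathfrak g=\mathbb Cf\oplus\mathfrak g_{-1/2}\oplus\mathfrak g_0\oplus\mathfrak g_{1/2}\oplus\mathbb Ce$, and suppose the $\mathfrak g_0$-module $\mathfrak g_{1/2}$ is irreducible. If $\phi,\phi'$ are almost compact involutions of $\mathfrak g$ with $\phi|_{\mathfrak g_0}=\phi'|_{\mathfrak g_0}$, then either $\phi'=\phi$ or $\phi'(a)=(-1)^{2j}\phi(a)$ for all $a\in\mathfrak g_j$, $j\in\{0,\pm\frac12,\pm1\}$. (That is, an almost compact involution is determined up to a sign by its action on $\mathfrak g_0$.)
   Context: $\mathfrak g_j$ denotes the $j$-eigenspace of $\mathrm{ad}\,x$; $[x,e]=e$, $[x,f]=-f$, $[e,f]=x$; $\mathfrak g_{\pm1/2}$ odd, $\mathfrak g_0$ even. $\mathfrak g^\natural$ is the centralizer of $\{e,x,f\}$ in $\mathfrak g_{\bar0}$. An almost compact involution is a conjugate-linear involutive automorphism of $\mathfrak g$ fixing $e,x,f$ whose restriction to $\mathfrak g^\natural$ is compact. *)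

theory Defs
  imports Complex_Main
begin

text \<open>A complex Lie superalgebra is modelled on a type 'a with a complex scalar
multiplication sc, a bracket br, and parity subspaces V False (even) and V True (odd).\<close>

definition super_sign :: "bool \<Rightarrow> bool \<Rightarrow> complex" where
  "super_sign p q = (if p \<and> q then -1 else 1)"

definition lie_superalgebra ::
  "(complex \<Rightarrow> 'a::ab_group_add \<Rightarrow> 'a) \<Rightarrow> ('a \<Rightarrow> 'a \<Rightarrow> 'a) \<Rightarrow> (bool \<Rightarrow> 'a set) \<Rightarrow> bool" where
  "lie_superalgebra sc br V \<longleftrightarrow>
     vector_space sc \<and>
     (\<forall>p. module.subspace sc (V p)) \<and>
     V False \<inter> V True = {0} \<and>
     (\<forall>a. \<exists>a0 a1. a0 \<in> V False \<and> a1 \<in> V True \<and> a = a0 + a1) \<and>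
     (\<forall>a b c. br (a + b) c = br a c + br b c) \<and>
     (\<forall>a b c. br a (b + c) = br a b + br a c) \<and>
     (\<forall>k a b. br (sc k a) b = sc k (br a b)) \<and>
     (\<forall>k a b. br a (sc k b) = sc k (br a b)) \<and>
     (\<forall>p q a b. a \<in> V p \<longrightarrow> b \<in> V q \<longrightarrow> br a b \<in> V (p \<noteq> q)) \<and>
     (\<forall>p q a b. a \<in> V p \<longrightarrow> b \<in> V q \<longrightarrow> br a b = - sc (super_sign p q) (br b a)) \<and>
     (\<forall>p q a b c. a \<in> V p \<longrightarrow> b \<in> V q \<longrightarrow>
        br a (br b c) = br (br a b) c + sc (super_sign p q) (br b (br a c)))"

definition finite_dim :: "(complex \<Rightarrow> 'a::ab_group_add \<Rightarrow> 'a) \<Rightarrow> bool" where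
  "finite_dim sc \<longleftrightarrow> (\<exists>B. finite B \<and> module.span sc B = UNIV)"

definition graded_ideal ::
  "(complex \<Rightarrow> 'a::ab_group_add \<Rightarrow> 'a) \<Rightarrow> ('a \<Rightarrow> 'a \<Rightarrow> 'a) \<Rightarrow> (bool \<Rightarrow> 'a set) \<Rightarrow> 'a set \<Rightarrow> bool" where
  "graded_ideal sc br V I \<longleftrightarrow>
     module.subspace sc I \<and>
     (\<forall>a\<in>I. \<exists>a0 a1. a0 \<in> I \<inter> V False \<and> a1 \<in> I \<inter> V True \<and> a = a0 + a1) \<and>
     (\<forall>a b. b \<in> I \<longrightarrow> br a b \<in> I)"

definition simple_lie_superalgebra ::
  "(complex \<Rightarrow> 'a::ab_group_add \<Rightarrow> 'a) \<Rightarrow> ('a \<Rightarrow> 'a \<Rightarrow> 'a) \<Rightarrow> (bool \<Rightarrow> 'a set) \<Rightarrow> bool" where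
  "simple_lie_superalgebra sc br V \<longleftrightarrow>
     lie_superalgebra sc br V \<and> (\<exists>a b. br a b \<noteq> 0) \<and>
     (\<forall>I. graded_ideal sc br V I \<longrightarrow> I = {0} \<or> I = UNIV)"

definition even_part_reductive ::
  "(complex \<Rightarrow> 'a::ab_group_add \<Rightarrow> 'a) \<Rightarrow> ('a \<Rightarrow> 'a \<Rightarrow> 'a) \<Rightarrow> (bool \<Rightarrow> 'a set) \<Rightarrow> bool" where
  "even_part_reductive sc br V \<longleftrightarrow>
     (\<forall>W. module.subspace sc W \<and> W \<subseteq> V False \<and> (\<forall>a\<in>V False. \<forall>w\<in>W. br a w \<in> W) \<longrightarrow>
        (\<exists>W'. module.subspace sc W' \<and> W' \<subseteq> V False \<and> (\<forall>a\<in>V False. \<forall>w\<in>W'. br a w \<in> W') \<and>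
              W \<inter> W' = {0} \<and> (\<forall>v\<in>V False. \<exists>w w'. w \<in> W \<and> w' \<in> W' \<and> v = w + w')))"

definition has_invariant_form ::
  "(complex \<Rightarrow> 'a::ab_group_add \<Rightarrow> 'a) \<Rightarrow> ('a \<Rightarrow> 'a \<Rightarrow> 'a) \<Rightarrow> (bool \<Rightarrow> 'a set) \<Rightarrow> bool" where
  "has_invariant_form sc br V \<longleftrightarrow>
     (\<exists>B :: 'a \<Rightarrow> 'a \<Rightarrow> complex.
        (\<forall>a b c. B (a + b) c = B a c + B b c) \<and>
        (\<forall>a b c. B a (b + c) = B a b + B a c) \<and>
        (\<forall>k a b. B (sc k a) b = k * B a b) \<and>
        (\<forall>k a b. B a (sc k b) = k * B a b) \<and>
        (\<forall>a b. a \<in> V False \<longrightarrow> b \<in> V True \<longrightarrow> B a b = 0 \<and> B b a = 0) \<and>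
        (\<forall>p q a b. a \<in> V p \<longrightarrow> b \<in> V q \<longrightarrow> B a b = super_sign p q * B b a) \<and>
        (\<forall>a b c. B (br a b) c = B a (br b c)) \<and>
        (\<forall>a. (\<forall>b. B a b = 0) \<longrightarrow> a = 0))"

definition basic_simple_lie_superalgebra ::
  "(complex \<Rightarrow> 'a::ab_group_add \<Rightarrow> 'a) \<Rightarrow> ('a \<Rightarrow> 'a \<Rightarrow> 'a) \<Rightarrow> (bool \<Rightarrow> 'a set) \<Rightarrow> bool" where
  "basic_simple_lie_superalgebra sc br V \<longleftrightarrow>
     finite_dim sc \<and> simple_lie_superalgebra sc br V \<and>
     even_part_reductive sc br V \<and> has_invariant_form sc br V"

definition ad_eig ::
  "(complex \<Rightarrow> 'a \<Rightarrow> 'a) \<Rightarrow> ('a \<Rightarrow> 'a \<Rightarrow> 'a) \<Rightarrow> 'a \<Rightarrow> real \<Rightarrow> 'a set" where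
  "ad_eig sc br x j = {a. br x a = sc (of_real j) a}"

definition minimal_sl2_triple ::
  "(complex \<Rightarrow> 'a::ab_group_add \<Rightarrow> 'a) \<Rightarrow> ('a \<Rightarrow> 'a \<Rightarrow> 'a) \<Rightarrow> (bool \<Rightarrow> 'a set) \<Rightarrow> 'a \<Rightarrow> 'a \<Rightarrow> 'a \<Rightarrow> bool" where
  "minimal_sl2_triple sc br V e x f \<longleftrightarrow>
     e \<in> V False \<and> x \<in> V False \<and> f \<in> V False \<and>
     br x e = e \<and> br x f = - f \<and> br e f = x \<and>
     (\<forall>a. \<exists>a1 a2 a3 a4 a5.
        a1 \<in> ad_eig sc br x (-1) \<and> a2 \<in> ad_eig sc br x (-1/2) \<and> a3 \<in> ad_eig sc br x 0 \<and>
        a4 \<in> ad_eig sc br x (1/2) \<and> a5 \<in> ad_eig sc br x 1 \<and> a = a1 + a2 + a3 + a4 + a5) \<and>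
     ad_eig sc br x 1 = range (\<lambda>c. sc c e) \<and>
     ad_eig sc br x (-1) = range (\<lambda>c. sc c f) \<and>
     ad_eig sc br x 0 \<subseteq> V False \<and>
     ad_eig sc br x (1/2) \<subseteq> V True \<and> ad_eig sc br x (-1/2) \<subseteq> V True"

definition half_irreducible ::
  "(complex \<Rightarrow> 'a::ab_group_add \<Rightarrow> 'a) \<Rightarrow> ('a \<Rightarrow> 'a \<Rightarrow> 'a) \<Rightarrow> 'a \<Rightarrow> bool" where
  "half_irreducible sc br x \<longleftrightarrow>
     ad_eig sc br x (1/2) \<noteq> {0} \<and>
     (\<forall>W. module.subspace sc W \<and> W \<subseteq> ad_eig sc br x (1/2) \<and>
          (\<forall>a\<in>ad_eig sc br x 0. \<forall>w\<in>W. br a w \<in> W) \<longrightarrow>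
          W = {0} \<or> W = ad_eig sc br x (1/2))"

definition g_natural ::
  "('a \<Rightarrow> 'a \<Rightarrow> 'a::zero) \<Rightarrow> (bool \<Rightarrow> 'a set) \<Rightarrow> 'a \<Rightarrow> 'a \<Rightarrow> 'a \<Rightarrow> 'a set" where
  "g_natural br V e x f = {a \<in> V False. br a e = 0 \<and> br a x = 0 \<and> br a f = 0}"

definition conj_linear_involution ::
  "(complex \<Rightarrow> 'a::ab_group_add \<Rightarrow> 'a) \<Rightarrow> ('a \<Rightarrow> 'a \<Rightarrow> 'a) \<Rightarrow> (bool \<Rightarrow> 'a set) \<Rightarrow> ('a \<Rightarrow> 'a) \<Rightarrow> bool" where
  "conj_linear_involution sc br V \<phi> \<longleftrightarrow>
     (\<forall>a b. \<phi> (a + b) = \<phi> a + \<phi> b) \<and>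
     (\<forall>k a. \<phi> (sc k a) = sc (cnj k) (\<phi> a)) \<and>
     (\<forall>a b. \<phi> (br a b) = br (\<phi> a) (\<phi> b)) \<and>
     (\<forall>p. \<phi> ` V p \<subseteq> V p) \<and>
     (\<forall>a. \<phi> (\<phi> a) = a)"

text \<open>The restriction of phi to K is compact: its fixed-point real form
  is a compact Lie algebra (admits a positive definite ad-invariant inner product).\<close>
definition compact_on ::
  "(complex \<Rightarrow> 'a::ab_group_add \<Rightarrow> 'a) \<Rightarrow> ('a \<Rightarrow> 'a \<Rightarrow> 'a) \<Rightarrow> ('a \<Rightarrow> 'a) \<Rightarrow> 'a set \<Rightarrow> bool" where
  "compact_on sc br \<phi> K \<longleftrightarrow>
     (\<exists>P :: 'a \<Rightarrow> 'a \<Rightarrow> real.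
        let R = {a \<in> K. \<phi> a = a} in
        (\<forall>a\<in>R. \<forall>b\<in>R. P a b = P b a) \<and>
        (\<forall>a\<in>R. \<forall>b\<in>R. \<forall>c\<in>R. P (a + b) c = P a c + P b c) \<and>
        (\<forall>r::real. \<forall>a\<in>R. \<forall>b\<in>R. P (sc (of_real r) a) b = r * P a b) \<and>
        (\<forall>a\<in>R. a \<noteq> 0 \<longrightarrow> P a a > 0) \<and>
        (\<forall>a\<in>R. \<forall>b\<in>R. \<forall>c\<in>R. P (br a b) c + P b (br a c) = 0))"

definition almost_compact_involution ::
  "(complex \<Rightarrow> 'a::ab_group_add \<Rightarrow> 'a) \<Rightarrow> ('a \<Rightarrow> 'a \<Rightarrow> 'a) \<Rightarrow> (bool \<Rightarrow> 'a set) \<Rightarrow> 'a \<Rightarrow> 'a \<Rightarrow> 'a \<Rightarrow> ('a \<Rightarrow> 'a) \<Rightarrow> bool" where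
  "almost_compact_involution sc br V e x f \<phi> \<longleftrightarrow>
     conj_linear_involution sc br V \<phi> \<and> \<phi> e = e \<and> \<phi> x = x \<and> \<phi> f = f \<and>
     compact_on sc br \<phi> (g_natural br V e x f)"

end

(*
  The product \<psi> = \<phi>' \<circ> \<phi> of the two involutions is a complex-linear
  automorphism which is the identity on g_0 and fixes e and f.  Since \<psi> commutes with the
  action of g_0, Schur's lemma (an eigenvector exists by the fundamental theorem of algebra)
  makes \<psi> a scalar l on the irreducible g_0-module g_{1/2}.  The invariant form shows that
  [g_{1/2}, g_{1/2}] is a nonzero subspace of g_1 = Ce, on which \<psi> is trivial, so l^2 = 1;
  and as ad e is injective on g_{-1/2}, \<psi> is also l there.  So \<psi> is the identity or
  (-1)^{2j} on g_j, and \<phi>' = \<psi> \<circ> \<phi>.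
*)

theory Submission
  imports Defs "HOL-Computational_Algebra.Fundamental_Theorem_Algebra"
begin

locale complex_endomorphism = vector_space sc for sc :: "complex \<Rightarrow> 'a::ab_group_add \<Rightarrow> 'a" +
  fixes \<psi> :: "'a \<Rightarrow> 'a"
  assumes endo_add: "\<psi> (a + b) = \<psi> a + \<psi> b"
    and endo_scale: "\<psi> (sc c a) = sc c (\<psi> a)"
begin

lemma endo_zero [simp]: "\<psi> 0 = 0"
  using endo_add[of 0 0] by simp

text \<open>\<open>poly_endo p v\<close> is \<open>p(\<psi>) v\<close>, evaluated by Horner's scheme.\<close>
definition poly_endo :: "complex poly \<Rightarrow> 'a \<Rightarrow> 'a" where
  "poly_endo p v = fold_coeffs (\<lambda>c w. sc c v + \<psi> w) p 0"

lemma poly_endo_0 [simp]: "poly_endo 0 v = 0"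
  by (simp add: poly_endo_def)

lemma poly_endo_pCons [simp]: "poly_endo (pCons a p) v = sc a v + \<psi> (poly_endo p v)"
  by (cases "p = 0 \<and> a = 0") (auto simp: poly_endo_def)

lemma poly_endo_add: "poly_endo (p + q) v = poly_endo p v + poly_endo q v"
  by (induction p q rule: poly_induct2) (simp_all add: endo_add algebra_simps)

lemma poly_endo_smult: "poly_endo (smult c p) v = sc c (poly_endo p v)"
  by (induction p) (simp_all add: endo_scale scale_right_distrib)

lemma poly_endo_linear_factor:
  "poly_endo ([:-r, 1:] * q) v = \<psi> (poly_endo q v) - sc r (poly_endo q v)"
proof -
  have "[:-r, 1:] * q = pCons 0 q + smult (-r) q" by simp
  then show ?thesis
    by (simp only: poly_endo_add poly_endo_smult poly_endo_pCons) simp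
qed

lemma poly_endo_monom: "poly_endo (monom c n) v = sc c ((\<psi> ^^ n) v)"
  by (induction n) (simp_all add: monom_0 monom_Suc endo_scale)

lemma poly_endo_sum: "poly_endo (\<Sum>i\<in>I. p i) v = (\<Sum>i\<in>I. poly_endo (p i) v)"
  by (induction I rule: infinite_finite_induct) (simp_all add: poly_endo_add)

lemma poly_endo_in_subspace:
  assumes "subspace U" "\<psi> ` U \<subseteq> U" "v \<in> U"
  shows "poly_endo p v \<in> U"
  by (induction p) (use assms in \<open>auto intro: subspace_add subspace_scale subspace_0\<close>)

text \<open>The vectors \<open>v, \<psi> v, \<dots>, \<psi>\<^sup>n v\<close> with \<open>n = card B\<close> are linearly dependent.\<close>
lemma annihilating_poly_exists:
  assumes "finite B" "span B = UNIV"
  shows "\<exists>p. p \<noteq> 0 \<and> poly_endo p v = 0"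
proof -
  define n where "n = card B"
  define F where "F i = (\<psi> ^^ i) v" for i
  show ?thesis
  proof (cases "inj_on F {..n}")
    case False
    then obtain i j where ij: "i \<noteq> j" "F i = F j"
      unfolding inj_on_def by blast
    let ?p = "monom 1 i + monom (-1) j"
    have "coeff ?p i = 1" using ij by simp
    moreover have "poly_endo ?p v = 0"
      using ij by (simp add: poly_endo_add poly_endo_monom F_def)
    ultimately show ?thesis by (metis coeff_0 zero_neq_one)
  next
    case True
    have "\<not> independent (F ` {..n})"
    proof
      assume "independent (F ` {..n})"
      then have "card (F ` {..n}) \<le> card B"
        using independent_span_bound[OF assms(1)] assms(2) by blast
      then show False using True by (simp add: card_image n_def)
    qed
    then obtain u where u: "\<exists>w\<in>F ` {..n}. u w \<noteq> 0" "(\<Sum>w\<in>F ` {..n}. sc (u w) w) = 0"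
      using dependent_finite by blast
    define p where "p = (\<Sum>i\<le>n. monom (u (F i)) i)"
    have "coeff p i = u (F i)" if "i \<le> n" for i
      using that by (simp add: p_def coeff_sum)
    then have "p \<noteq> 0"
      using u(1) by (metis atMost_iff coeff_0 imageE)
    have "poly_endo p v = (\<Sum>i\<le>n. sc (u (F i)) (F i))"
      by (simp add: p_def poly_endo_sum poly_endo_monom F_def)
    also have "\<dots> = 0"
      using u(2) by (simp add: sum.reindex[OF True])
    finally show ?thesis
      using \<open>p \<noteq> 0\<close> by blast
  qed
qed

text \<open>Split off a root \<open>r\<close> of \<open>p = (X - r) q\<close>: either \<open>q(\<psi>) v\<close> is an eigenvector for \<open>r\<close>,
  or \<open>q\<close> annihilates \<open>v\<close> and has smaller degree.\<close>
lemma eigenvector_of_annihilating_poly: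
  assumes U: "subspace U" "\<psi> ` U \<subseteq> U" and v: "v \<in> U" "v \<noteq> 0"
    and "p \<noteq> 0" "poly_endo p v = 0"
  shows "\<exists>w l. w \<in> U \<and> w \<noteq> 0 \<and> \<psi> w = sc l w"
  using assms(5,6)
proof (induction "degree p" arbitrary: p rule: less_induct)
  case less
  show ?case
  proof (cases "degree p = 0")
    case True
    then obtain c where "p = [:c:]" by (rule degree_eq_zeroE)
    then show ?thesis using less.prems v by simp
  next
    case False
    then obtain r where "poly p r = 0"
      by (metis fundamental_theorem_of_algebra constant_degree)
    then obtain q where p: "p = [:-r, 1:] * q"
      by (auto simp: poly_eq_0_iff_dvd)
    with less.prems have "q \<noteq> 0" by auto
    then have deg: "degree q < degree p"
      by (simp add: p degree_mult_eq del: mult_pCons_left)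
    define w where "w = poly_endo q v"
    have "w \<in> U" using poly_endo_in_subspace[OF U v(1)] by (simp add: w_def)
    moreover have "\<psi> w = sc r w"
      using less.prems(2) unfolding p poly_endo_linear_factor by (simp add: w_def)
    moreover have "w = 0 \<Longrightarrow> ?thesis"
      using less.hyps[OF deg \<open>q \<noteq> 0\<close>] by (simp add: w_def)
    ultimately show ?thesis by blast
  qed
qed

lemma invariant_subspace_has_eigenvector:
  assumes "finite B" "span B = UNIV" "subspace U" "\<psi> ` U \<subseteq> U" "U \<noteq> {0}"
  shows "\<exists>w l. w \<in> U \<and> w \<noteq> 0 \<and> \<psi> w = sc l w"
proof -
  obtain v where "v \<in> U" "v \<noteq> 0" using assms(3,5) subspace_0 by blast
  moreover obtain p where "p \<noteq> 0" "poly_endo p v = 0"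
    using annihilating_poly_exists[OF assms(1,2)] by blast
  ultimately show ?thesis using eigenvector_of_annihilating_poly assms(3,4) by blast
qed

end

locale minimal_graded_superalgebra =
  fixes sc :: "complex \<Rightarrow> 'a::ab_group_add \<Rightarrow> 'a" and br :: "'a \<Rightarrow> 'a \<Rightarrow> 'a"
    and V :: "bool \<Rightarrow> 'a set" and e x f :: 'a
  assumes lie: "lie_superalgebra sc br V"
    and triple: "minimal_sl2_triple sc br V e x f"
begin

sublocale vector_space sc
  using lie unfolding lie_superalgebra_def by fast

abbreviation \<gg> :: "real \<Rightarrow> 'a set" where
  "\<gg> j \<equiv> ad_eig sc br x j"

lemma br_add_left: "br (a + b) c = br a c + br b c"
  using lie unfolding lie_superalgebra_def by fast

lemma br_add_right: "br a (b + c) = br a b + br a c"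
  using lie unfolding lie_superalgebra_def by fast

lemma br_scale_left: "br (sc k a) b = sc k (br a b)"
  using lie unfolding lie_superalgebra_def by fast

lemma br_scale_right: "br a (sc k b) = sc k (br a b)"
  using lie unfolding lie_superalgebra_def by fast

lemma br_parity: "a \<in> V p \<Longrightarrow> b \<in> V q \<Longrightarrow> br a b \<in> V (p \<noteq> q)"
  using lie unfolding lie_superalgebra_def by fast

lemma br_antisym: "a \<in> V p \<Longrightarrow> b \<in> V q \<Longrightarrow> br a b = - sc (super_sign p q) (br b a)"
  using lie unfolding lie_superalgebra_def by fast

lemma br_jacobi: "a \<in> V p \<Longrightarrow> b \<in> V q \<Longrightarrow>
    br a (br b c) = br (br a b) c + sc (super_sign p q) (br b (br a c))"
  using lie unfolding lie_superalgebra_def by fast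

lemma e_even: "e \<in> V False" and x_even: "x \<in> V False" and f_even: "f \<in> V False"
  and br_x_e: "br x e = e" and br_x_f: "br x f = - f" and br_e_f: "br e f = x"
  and ad_eig_decomp: "\<exists>a1 a2 a3 a4 a5. a1 \<in> \<gg> (-1) \<and> a2 \<in> \<gg> (-1/2) \<and> a3 \<in> \<gg> 0 \<and>
        a4 \<in> \<gg> (1/2) \<and> a5 \<in> \<gg> 1 \<and> a = a1 + a2 + a3 + a4 + a5"
  and ad_eig_1: "\<gg> 1 = range (\<lambda>c. sc c e)"
  and ad_eig_minus_1: "\<gg> (-1) = range (\<lambda>c. sc c f)"
  and ad_eig_0_even: "\<gg> 0 \<subseteq> V False"
  and ad_eig_half_odd: "\<gg> (1/2) \<subseteq> V True"
  using triple[unfolded minimal_sl2_triple_def] by blast+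

lemma br_zero_left [simp]: "br 0 b = 0"
  using br_add_left[of 0 0 b] by simp

lemma br_minus_left: "br (- a) b = - br a b"
  using br_add_left[of "- a" a b] by (simp add: eq_neg_iff_add_eq_0)

lemma br_zero_right [simp]: "br a 0 = 0"
  using br_add_right[of a 0 0] by simp

lemma br_diff_right: "br a (b - c) = br a b - br a c"
  using br_add_right[of a "b - c" c] by (simp add: eq_diff_eq)

lemma mem_ad_eig_iff: "a \<in> \<gg> j \<longleftrightarrow> br x a = sc (of_real j) a"
  by (simp add: ad_eig_def)

lemma ad_eig_subspace: "subspace (\<gg> j)"
  unfolding subspace_def
  by (auto simp: mem_ad_eig_iff br_add_right br_scale_right scale_right_distrib mult.commute)

lemma ad_eig_bracket:
  assumes "a \<in> V p" "a \<in> \<gg> i" "b \<in> \<gg> j"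
  shows "br a b \<in> \<gg> (i + j)"
proof -
  have "br x (br a b) = br (br x a) b + br a (br x b)"
    using br_jacobi[OF x_even assms(1), where c = b] by (simp add: super_sign_def)
  also have "\<dots> = sc (of_real (i + j)) (br a b)"
    using assms(2,3) by (simp add: mem_ad_eig_iff br_scale_left br_scale_right scale_left_distrib)
  finally show ?thesis unfolding mem_ad_eig_iff .
qed

text \<open>The operator \<open>(ad x + 1)(ad x + 1/2) ad x (ad x - 1/2)(ad x - 1)\<close> kills every element
  by the grading, and acts on \<open>\<gg> j\<close> as a scalar that vanishes only at the five grades.\<close>
lemma ad_eig_eq_0:
  assumes a: "a \<in> \<gg> j" and j: "j \<notin> {-1, -1/2, 0, 1/2, 1}"
  shows "a = 0"
proof -
  define T where "T \<mu> b = br x b - sc (of_real \<mu>) b" for \<mu> b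
  define P where "P = T (-1) \<circ> T (-1/2) \<circ> T 0 \<circ> T (1/2) \<circ> T 1"
  define c :: "real \<Rightarrow> real" where "c l = (l + 1) * (l + 1/2) * l * (l - 1/2) * (l - 1)" for l
  have T_eig: "b \<in> \<gg> l \<Longrightarrow> T \<mu> b = sc (of_real (l - \<mu>)) b" for b l \<mu>
    by (simp add: T_def mem_ad_eig_iff scale_left_diff_distrib)
  have T_scale: "T \<mu> (sc k b) = sc k (T \<mu> b)" for \<mu> k b
    by (simp add: T_def br_scale_right scale_right_diff_distrib scale_left_commute)
  have T_add: "T \<mu> (b + d) = T \<mu> b + T \<mu> d" for \<mu> b d
    by (simp add: T_def br_add_right scale_right_distrib)
  have P_add: "P (b + d) = P b + P d" for b d
    by (simp add: P_def T_add)
  have P_eig: "b \<in> \<gg> l \<Longrightarrow> P b = sc (of_real (c l)) b" for b l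
  proof -
    assume "b \<in> \<gg> l"
    then have "P b = sc (of_real (l + 1)) (sc (of_real (l + 1/2)) (sc (of_real l)
        (sc (of_real (l - 1/2)) (sc (of_real (l - 1)) b))))"
      by (simp add: P_def T_eig T_scale)
    then show ?thesis by (simp add: c_def mult.assoc)
  qed
  obtain a1 a2 a3 a4 a5 where d: "a1 \<in> \<gg> (-1)" "a2 \<in> \<gg> (-1/2)" "a3 \<in> \<gg> 0"
    "a4 \<in> \<gg> (1/2)" "a5 \<in> \<gg> 1" "a = a1 + a2 + a3 + a4 + a5"
    using ad_eig_decomp by blast
  have "P a = 0"
    using d by (simp add: P_add P_eig c_def)
  moreover have "c j \<noteq> 0"
    using j by (simp add: c_def)
  ultimately show ?thesis
    using P_eig[OF a] by simp
qed

lemma e_in_ad_eig_1: "e \<in> \<gg> 1"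
  by (simp add: mem_ad_eig_iff br_x_e)

lemma f_in_ad_eig_minus_1: "f \<in> \<gg> (-1)"
  by (simp add: mem_ad_eig_iff br_x_f)

lemma br_f_br_e:
  assumes y: "y \<in> \<gg> (-1/2)"
  shows "br f (br e y) = sc (1/2) y"
proof -
  have "br f y = 0"
    using ad_eig_eq_0[OF ad_eig_bracket[OF f_even f_in_ad_eig_minus_1 y]] by simp
  moreover have "br f e = - x"
    using br_antisym[OF f_even e_even] by (simp add: br_e_f super_sign_def)
  moreover have "br f (br e y) = br (br f e) y + br e (br f y)"
    using br_jacobi[OF f_even e_even, where c = y] by (simp add: super_sign_def)
  ultimately show ?thesis
    using y by (simp add: br_minus_left mem_ad_eig_iff)
qed

lemma ad_eig_preserved:
  assumes "\<chi> x = x" "\<And>a b. \<chi> (br a b) = br (\<chi> a) (\<chi> b)"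
    and "\<And>a. \<chi> (sc (of_real j) a) = sc (of_real j) (\<chi> a)"
    and "a \<in> \<gg> j"
  shows "\<chi> a \<in> \<gg> j"
proof -
  have "br x (\<chi> a) = \<chi> (br x a)"
    using assms(1,2) by simp
  also have "\<dots> = sc (of_real j) (\<chi> a)"
    using assms(3,4) by (simp add: mem_ad_eig_iff)
  finally show ?thesis
    unfolding mem_ad_eig_iff .
qed

lemma conj_linear_involution_ad_eig:
  assumes "conj_linear_involution sc br V \<chi>" "\<chi> x = x" "a \<in> \<gg> j"
  shows "\<chi> a \<in> \<gg> j"
proof (rule ad_eig_preserved[where \<chi> = \<chi>, OF assms(2) _ _ assms(3)])
  show "\<chi> (br a b) = br (\<chi> a) (\<chi> b)" for a b
    using assms(1) by (simp add: conj_linear_involution_def)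
  show "\<chi> (sc (of_real j) a) = sc (of_real j) (\<chi> a)" for a
    using assms(1) by (simp add: conj_linear_involution_def)
qed

text \<open>A nonzero \<open>a \<in> \<gg>(1/2)\<close> pairs under the form only with \<open>\<gg>(-1/2)\<close>, say with \<open>y\<close>;
  then \<open>c = [e, y] \<in> \<gg>(1/2)\<close> satisfies \<open>B(a, [f, c]) = B(a, y)/2 \<noteq> 0\<close>, and invariance moves
  this to \<open>-B(f, [c, a])\<close>.\<close>
lemma half_bracket_nonzero:
  assumes form: "has_invariant_form sc br V" and ne: "\<gg> (1/2) \<noteq> {0}"
  obtains c a where "c \<in> \<gg> (1/2)" "a \<in> \<gg> (1/2)" "br c a \<noteq> 0"
proof -
  obtain B :: "'a \<Rightarrow> 'a \<Rightarrow> complex" where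
    B_add_right: "\<forall>a b c. B a (b + c) = B a b + B a c"
    and B_scale_left: "\<forall>k a b. B (sc k a) b = k * B a b"
    and B_scale_right: "\<forall>k a b. B a (sc k b) = k * B a b"
    and B_supersym: "\<forall>p q a b. a \<in> V p \<longrightarrow> b \<in> V q \<longrightarrow> B a b = super_sign p q * B b a"
    and B_invariant: "\<forall>a b c. B (br a b) c = B a (br b c)"
    and B_nondegenerate: "\<forall>a. (\<forall>b. B a b = 0) \<longrightarrow> a = 0"
    using form unfolding has_invariant_form_def by (elim exE conjE) (rule that; assumption)
  obtain a where a: "a \<in> \<gg> (1/2)" "a \<noteq> 0"
    using ne subspace_0[OF ad_eig_subspace] by blast
  have a_odd: "a \<in> V True"
    using a(1) ad_eig_half_odd by blast
  obtain y where y: "B a y \<noteq> 0"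
    using B_nondegenerate a(2) by blast
  have B_grade: "(of_real j + 1/2) * B a b = 0" if "b \<in> \<gg> j" for b j
  proof -
    have "br a x = sc (- 1/2) a"
      using br_antisym[OF a_odd x_even] a(1) by (simp add: mem_ad_eig_iff super_sign_def)
    then have "B (br a x) b = - 1/2 * B a b"
      using B_scale_left by metis
    moreover have "B (br a x) b = of_real j * B a b"
      using that by (simp add: B_invariant mem_ad_eig_iff B_scale_right)
    ultimately show ?thesis by (simp add: algebra_simps)
  qed
  obtain y1 y2 y3 y4 y5 where d: "y1 \<in> \<gg> (-1)" "y2 \<in> \<gg> (-1/2)" "y3 \<in> \<gg> 0"
    "y4 \<in> \<gg> (1/2)" "y5 \<in> \<gg> 1" "y = y1 + y2 + y3 + y4 + y5"
    using ad_eig_decomp by blast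
  have "B a y = B a y2"
    using B_grade[OF d(1)] B_grade[OF d(3)] B_grade[OF d(4)] B_grade[OF d(5)]
    by (simp add: d(6) B_add_right)
  define c where "c = br e y2"
  have c: "c \<in> \<gg> (1/2)"
    using ad_eig_bracket[OF e_even e_in_ad_eig_1 d(2)] by (simp add: c_def)
  have "B a (br f c) = 1/2 * B a y2"
    by (simp add: c_def br_f_br_e[OF d(2)] B_scale_right)
  moreover have "br f c \<in> V True"
    using br_parity[OF f_even, of c True] c ad_eig_half_odd by auto
  then have "B a (br f c) = - B f (br c a)"
    using B_supersym[rule_format, OF a_odd] B_invariant by (simp add: super_sign_def)
  moreover have "B f 0 = 0"
    using B_add_right[rule_format, of f 0 0] by simp
  ultimately have "br c a \<noteq> 0"
    using y \<open>B a y = B a y2\<close> by auto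
  then show ?thesis
    using that c a(1) by blast
qed

end

locale g0_trivial_automorphism = minimal_graded_superalgebra +
  fixes \<psi> :: "'a \<Rightarrow> 'a"
  assumes aut_add: "\<psi> (a + b) = \<psi> a + \<psi> b"
    and aut_scale: "\<psi> (sc c a) = sc c (\<psi> a)"
    and aut_bracket: "\<psi> (br a b) = br (\<psi> a) (\<psi> b)"
    and aut_ad_eig_0: "a \<in> \<gg> 0 \<Longrightarrow> \<psi> a = a"
    and aut_e: "\<psi> e = e"
    and aut_f: "\<psi> f = f"
begin

sublocale complex_endomorphism sc \<psi>
  by unfold_locales (fact aut_add aut_scale)+

lemma aut_x: "\<psi> x = x"
  using aut_bracket[of e f] by (simp add: aut_e aut_f br_e_f)

lemma aut_ad_eig: "a \<in> \<gg> j \<Longrightarrow> \<psi> a \<in> \<gg> j"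
  by (rule ad_eig_preserved) (simp_all add: aut_x aut_bracket aut_scale)

lemma aut_ad_eig_1: "a \<in> \<gg> 1 \<Longrightarrow> \<psi> a = a"
  and aut_ad_eig_minus_1: "a \<in> \<gg> (-1) \<Longrightarrow> \<psi> a = a"
  by (auto simp: ad_eig_1 ad_eig_minus_1 aut_scale aut_e aut_f)

text \<open>Schur's lemma: \<open>\<psi>\<close> commutes with the action of \<open>\<gg>0\<close> on the irreducible module \<open>\<gg>(1/2)\<close>.\<close>
lemma aut_scalar_on_half:
  assumes fin: "finite_dim sc" and irr: "half_irreducible sc br x"
  obtains l where "\<And>a. a \<in> \<gg> (1/2) \<Longrightarrow> \<psi> a = sc l a"
proof -
  obtain B where B: "finite B" "span B = UNIV"
    using fin unfolding finite_dim_def by blast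
  have "\<gg> (1/2) \<noteq> {0}"
    using irr by (simp add: half_irreducible_def)
  moreover have "\<psi> ` \<gg> (1/2) \<subseteq> \<gg> (1/2)"
    using aut_ad_eig by blast
  ultimately obtain w l where w: "w \<in> \<gg> (1/2)" "w \<noteq> 0" "\<psi> w = sc l w"
    using invariant_subspace_has_eigenvector[OF B ad_eig_subspace] by blast
  define W where "W = {a \<in> \<gg> (1/2). \<psi> a = sc l a}"
  have "subspace W"
    using subspace_0[OF ad_eig_subspace] subspace_add[OF ad_eig_subspace]
      subspace_scale[OF ad_eig_subspace]
    by (auto simp: subspace_def W_def aut_add aut_scale scale_right_distrib scale_left_commute)
  moreover have "br b v \<in> W" if "b \<in> \<gg> 0" "v \<in> W" for b v
  proof -
    have "br b v \<in> \<gg> (1/2)"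
      using ad_eig_bracket[of b False 0 v "1/2"] that ad_eig_0_even by (auto simp: W_def)
    moreover have "\<psi> (br b v) = sc l (br b v)"
      using that by (simp add: W_def aut_bracket aut_ad_eig_0 br_scale_right)
    ultimately show ?thesis by (simp add: W_def)
  qed
  ultimately have "W = {0} \<or> W = \<gg> (1/2)"
    using irr unfolding half_irreducible_def by (auto simp: W_def)
  then have "W = \<gg> (1/2)"
    using w by (auto simp: W_def)
  then show ?thesis
    using that by (auto simp: W_def)
qed

text \<open>Some \<open>[c, a]\<close> with \<open>c, a \<in> \<gg>(1/2)\<close> is a nonzero multiple of \<open>e\<close>, fixed by \<open>\<psi>\<close>,
  while \<open>\<psi>\<close> scales it by \<open>l\<^sup>2\<close>.\<close>
lemma aut_scalar_on_half_sign:
  assumes form: "has_invariant_form sc br V" and ne: "\<gg> (1/2) \<noteq> {0}"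
    and l: "\<And>a. a \<in> \<gg> (1/2) \<Longrightarrow> \<psi> a = sc l a"
  shows "l = 1 \<or> l = -1"
proof -
  obtain c a where ca: "c \<in> \<gg> (1/2)" "a \<in> \<gg> (1/2)" "br c a \<noteq> 0"
    using half_bracket_nonzero[OF form ne] by blast
  have "br c a \<in> \<gg> 1"
    using ad_eig_bracket[of c True "1/2" a "1/2"] ca ad_eig_half_odd by auto
  then have "br c a = \<psi> (br c a)"
    by (simp add: aut_ad_eig_1)
  also have "\<dots> = sc (l * l) (br c a)"
    using ca by (simp add: aut_bracket l br_scale_left br_scale_right)
  finally have "l * l = 1"
    using ca(3) scale_cancel_right[of 1 "br c a" "l * l"] by simp
  then show ?thesis
    by (metis power2_eq_1_iff power2_eq_square)
qed

text \<open>\<open>ad e\<close> is injective on \<open>\<gg>(-1/2)\<close>, since \<open>[f, [e, y]] = y/2\<close>.\<close>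
lemma aut_scalar_on_minus_half:
  assumes l: "\<And>a. a \<in> \<gg> (1/2) \<Longrightarrow> \<psi> a = sc l a" and y: "y \<in> \<gg> (-1/2)"
  shows "\<psi> y = sc l y"
proof -
  define d where "d = \<psi> y - sc l y"
  have d: "d \<in> \<gg> (-1/2)"
    unfolding d_def
    by (intro subspace_diff[OF ad_eig_subspace] subspace_scale[OF ad_eig_subspace] aut_ad_eig y)
  have "br e y \<in> \<gg> (1/2)"
    using ad_eig_bracket[OF e_even e_in_ad_eig_1 y] by simp
  moreover have "br e (\<psi> y) = \<psi> (br e y)"
    by (simp add: aut_bracket aut_e)
  ultimately have "br e d = 0"
    using l by (simp add: d_def br_diff_right br_scale_right)
  then have "sc (1/2) d = 0"
    using br_f_br_e[OF d] by simp
  then show ?thesis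
    by (simp add: d_def)
qed

lemma aut_eq_id_or_parity:
  assumes "finite_dim sc" "has_invariant_form sc br V" "half_irreducible sc br x"
  shows "(\<forall>a. \<psi> a = a) \<or>
    (\<forall>j \<in> {-1, -1/2, 0, 1/2, 1::real}. \<forall>a \<in> \<gg> j. \<psi> a = sc ((-1) powi \<lfloor>2 * j\<rfloor>) a)"
proof -
  obtain l where half: "\<And>a. a \<in> \<gg> (1/2) \<Longrightarrow> \<psi> a = sc l a"
    using aut_scalar_on_half assms(1,3) by blast
  note minus_half = aut_scalar_on_minus_half[OF half]
  have "l = 1 \<or> l = -1"
    using aut_scalar_on_half_sign assms(2,3) half by (auto simp: half_irreducible_def)
  then show ?thesis
  proof
    assume "l = 1"
    have "\<psi> a = a" for a
    proof -
      obtain a1 a2 a3 a4 a5 where "a1 \<in> \<gg> (-1)" "a2 \<in> \<gg> (-1/2)" "a3 \<in> \<gg> 0"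
        "a4 \<in> \<gg> (1/2)" "a5 \<in> \<gg> 1" "a = a1 + a2 + a3 + a4 + a5"
        using ad_eig_decomp by blast
      then show ?thesis
        using \<open>l = 1\<close> by (simp add: aut_add half minus_half aut_ad_eig_0 aut_ad_eig_1 aut_ad_eig_minus_1)
    qed
    then show ?thesis by blast
  next
    assume "l = -1"
    have "\<lfloor>2 * (-1/2 :: real)\<rfloor> = -1"
      by (simp add: floor_eq_iff)
    then show ?thesis
      using \<open>l = -1\<close>
      by (auto simp: half minus_half aut_ad_eig_0 aut_ad_eig_1 aut_ad_eig_minus_1)
  qed
qed

end

lemma (in minimal_graded_superalgebra) involution_product_g0_trivial:
  assumes inv: "conj_linear_involution sc br V \<phi>" "conj_linear_involution sc br V \<phi>'"
    and fixed: "\<phi> e = e" "\<phi> x = x" "\<phi> f = f" "\<phi>' e = e" "\<phi>' f = f"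
    and agree: "\<forall>a \<in> \<gg> 0. \<phi> a = \<phi>' a"
  shows "g0_trivial_automorphism sc br V e x f (\<phi>' \<circ> \<phi>)"
proof unfold_locales
  show "(\<phi>' \<circ> \<phi>) a = a" if "a \<in> \<gg> 0" for a
    using agree conj_linear_involution_ad_eig[OF inv(1) fixed(2) that] inv(1)
    by (auto simp: conj_linear_involution_def)
qed (use inv fixed in \<open>simp_all add: conj_linear_involution_def\<close>)

theorem proposition4p2:
  fixes sc :: "complex \<Rightarrow> 'a::ab_group_add \<Rightarrow> 'a"
    and br :: "'a \<Rightarrow> 'a \<Rightarrow> 'a"
    and V :: "bool \<Rightarrow> 'a set"
    and e x f :: 'a
    and \<phi> \<phi>' :: "'a \<Rightarrow> 'a"
  assumes "basic_simple_lie_superalgebra sc br V"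
    and "minimal_sl2_triple sc br V e x f"
    and "half_irreducible sc br x"
    and "almost_compact_involution sc br V e x f \<phi>"
    and "almost_compact_involution sc br V e x f \<phi>'"
    and "\<forall>a \<in> ad_eig sc br x 0. \<phi> a = \<phi>' a"
  shows "\<phi>' = \<phi> \<or>
    (\<forall>j \<in> {-1, -1/2, 0, 1/2, 1::real}. \<forall>a \<in> ad_eig sc br x j.
        \<phi>' a = sc ((-1) powi \<lfloor>2 * j\<rfloor>) (\<phi> a))"
proof -
  have lie: "lie_superalgebra sc br V" and fin: "finite_dim sc"
    and form: "has_invariant_form sc br V"
    using assms(1) by (simp_all add: basic_simple_lie_superalgebra_def simple_lie_superalgebra_def)
  interpret minimal_graded_superalgebra sc br V e x f
    using lie assms(2) by unfold_locales
  have inv: "conj_linear_involution sc br V \<phi>" "conj_linear_involution sc br V \<phi>'"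
    and fixed: "\<phi> e = e" "\<phi> x = x" "\<phi> f = f" "\<phi>' e = e" "\<phi>' f = f"
    using assms(4,5) by (simp_all add: almost_compact_involution_def)
  interpret g0_trivial_automorphism sc br V e x f "\<phi>' \<circ> \<phi>"
    using involution_product_g0_trivial[OF inv fixed assms(6)] .
  have \<phi>'_eq: "\<phi>' a = (\<phi>' \<circ> \<phi>) (\<phi> a)" for a
    using inv(1) by (simp add: conj_linear_involution_def)
  from aut_eq_id_or_parity[OF fin form assms(3)] show ?thesis
  proof
    assume "\<forall>a. (\<phi>' \<circ> \<phi>) a = a"
    then have "\<phi>' a = \<phi> a" for a
      unfolding \<phi>'_eq[of a] by blast
    then show ?thesis by blast
  next
    assume parity: "\<forall>j \<in> {-1, -1/2, 0, 1/2, 1::real}. \<forall>a \<in> \<gg> j.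
      (\<phi>' \<circ> \<phi>) a = sc ((-1) powi \<lfloor>2 * j\<rfloor>) a"
    have "\<phi>' a = sc ((-1) powi \<lfloor>2 * j\<rfloor>) (\<phi> a)" if "j \<in> {-1, -1/2, 0, 1/2, 1}" "a \<in> \<gg> j" for j a
      unfolding \<phi>'_eq[of a]
      using parity that conj_linear_involution_ad_eig[OF inv(1) fixed(2)] by blast
    then show ?thesis by blast
  qed
qed

end
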